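(* Let $A>0$ and $0<v_{\mathrm{nozzle}}<1$. For every $w\ge0$, $A\,t_{\mathrm{end}}(w)^2<2/v_{\mathrm{nozzle}}$, and for every $w>0$, $$I(w)<\frac{1}{v_{\mathrm{nozzle}}\sqrt{w}}.$$ Consequently, if $B>0$ and $w>0$ satisfies $I(w)=B$, then $w\le \dfrac{1}{v_{\mathrm{nozzle}}^2B^2}$.
   Context: For $A>0$ and $w\ge0$, $v(\cdot;w):[0,\infty)\to(0,1]$ denotes the unique solution of $v'=-v^2(\sqrt{A^2t^2+w}+v)$, $v(0)=1$; it is strictly decreasing in $t$ and tends to $0$ as $t\to\infty$. For $0<v_{\mathrm{nozzle}}<1$, $t_{\mathrm{end}}(w)>0$ is the unique time with $v(t_{\mathrm{end}}(w);w)=v_{\mathrm{nozzle}}$, and $$I(w)=I(w;A,v_{\mathrm{nozzle}})=\int_0^{t_{\mathrm{end}}(w)}\frac{At\,v(t;w)}{\sqrt{A^2t^2+w}}\,dt.$$ *)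

theory Defs
  imports "HOL-Analysis.Analysis"
begin

text \<open>Solutions of the ODE v' = -v^2 (sqrt(A^2 t^2 + w) + v), v(0) = 1, on [0,\<infinity>).
  Values for t < 0 are normalised to 0 so that the solution is a unique function.\<close>

definition is_vsol :: "real \<Rightarrow> real \<Rightarrow> (real \<Rightarrow> real) \<Rightarrow> bool" where
  "is_vsol A w v \<longleftrightarrow> v 0 = 1 \<and>
     (\<forall>t\<ge>0. (v has_real_derivative (- (v t)\<^sup>2 * (sqrt (A\<^sup>2 * t\<^sup>2 + w) + v t))) (at t within {0..})) \<and>
     (\<forall>t<0. v t = 0)"

definition vsol :: "real \<Rightarrow> real \<Rightarrow> real \<Rightarrow> real" where
  "vsol A w = (THE v. is_vsol A w v)"

definition t_end :: "real \<Rightarrow> real \<Rightarrow> real \<Rightarrow> real" where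
  "t_end A vn w = (THE t. 0 \<le> t \<and> vsol A w t = vn)"

definition I_fun :: "real \<Rightarrow> real \<Rightarrow> real \<Rightarrow> real" where
  "I_fun A vn w = integral {0..t_end A vn w}
      (\<lambda>t. A * t * vsol A w t / sqrt (A\<^sup>2 * t\<^sup>2 + w))"

end

theory Submission
  imports Defs
begin

text \<open>The reciprocal \<open>u = 1 / v\<close> satisfies \<open>u' = \<surd>(A\<^sup>2 t\<^sup>2 + w) + v \<ge> A t\<close> and
  \<open>u 0 = 1\<close>, hence \<open>u t \<ge> 1 + A t\<^sup>2 / 2\<close>. Evaluating at \<open>t_end\<close>, where \<open>u = 1 / v_nozzle\<close>,
  gives \<open>A t_end\<^sup>2 / 2 \<le> 1 / v_nozzle - 1\<close>. Since \<open>0 < v \<le> 1\<close> and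
  \<open>\<surd>(A\<^sup>2 t\<^sup>2 + w) \<ge> \<surd>w\<close>, the integrand of \<open>I w\<close> is at most \<open>A t / \<surd>w\<close>, so
  \<open>I w \<le> A t_end\<^sup>2 / (2 \<surd>w) < 1 / (v_nozzle \<surd>w)\<close>; squaring gives the bound on \<open>w\<close>.
  Because \<open>vsol\<close> is defined by a description, the solution must also be shown to exist
  (by a Picard iteration for a truncated equation in \<open>u\<close>) and to be unique (by an
  integrating factor).\<close>

lemma integral_has_real_derivative_atLeast:
  assumes "continuous_on {a..} f" "a \<le> t"
  shows "((\<lambda>x. integral {a..x} f) has_real_derivative f t) (at t within {a..})"
proof -
  have "((\<lambda>x. integral {a..x} f) has_real_derivative f t) (at t within {a..t+1})"
    by (rule integral_has_real_derivative) (use assms in \<open>auto intro: continuous_on_subset\<close>)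
  moreover have "at t within {a..t+1} = at t within {a..}"
    by (rule at_within_nhd[where S="{..<t+1}"]) auto
  ultimately show ?thesis by simp
qed

lemma mvt_within_atLeast:
  fixes f :: "real \<Rightarrow> real"
  assumes "\<And>x. a \<le> x \<Longrightarrow> (f has_real_derivative f' x) (at x within {a..})"
    and "a \<le> b" "b \<le> c"
  obtains x where "b \<le> x" "x \<le> c" "f c - f b = f' x * (c - b)"
proof -
  have "\<exists>x\<in>{b..c}. f c - f b = (\<lambda>h. f' x * h) (c - b)"
  proof (rule mvt_very_simple[OF \<open>b \<le> c\<close>])
    fix x assume "b \<le> x" "x \<le> c"
    then have "(f has_real_derivative f' x) (at x within {b..c})"
      using assms(1)[of x] \<open>a \<le> b\<close> by (auto intro: DERIV_subset)
    then show "(f has_derivative (\<lambda>h. f' x * h)) (at x within {b..c})"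
      by (simp add: has_field_derivative_def)
  qed
  then show ?thesis using that by auto
qed

lemma linear_ode_solution_zero:
  fixes a y :: "real \<Rightarrow> real"
  assumes a: "continuous_on {0..} a" and y0: "y 0 = 0"
    and dy: "\<And>t. 0 \<le> t \<Longrightarrow> (y has_real_derivative a t * y t) (at t within {0..})"
    and t: "0 \<le> t"
  shows "y t = 0"
proof -
  define G where "G t = integral {0..t} a" for t
  have dG: "(G has_real_derivative a t) (at t within {0..})" if "0 \<le> t" for t
    unfolding G_def[abs_def] using a that by (rule integral_has_real_derivative_atLeast)
  have "((\<lambda>t. y t * exp (- G t)) has_real_derivative 0) (at t within {0..})" if "0 \<le> t" for t
    using dy[OF that] dG[OF that] by (auto intro!: derivative_eq_intros simp: algebra_simps)
  then obtain c where "\<forall>x\<in>{0..}. y x * exp (- G x) = c"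
    using has_field_derivative_zero_constant[of "{0..}" "\<lambda>t. y t * exp (- G t)"] by auto
  then have "y t * exp (- G t) = y 0 * exp (- G 0)" using t by simp
  then show ?thesis using y0 by simp
qed

section \<open>Bounded Lipschitz equations on the half-line\<close>

context
  fixes F :: "real \<Rightarrow> real \<Rightarrow> real" and L M :: real
  assumes F_continuous: "continuous_on ({0..} \<times> UNIV) (\<lambda>(t, x). F t x)"
    and F_bounded: "\<And>t x. 0 \<le> t \<Longrightarrow> \<bar>F t x\<bar> \<le> M"
    and F_lipschitz: "\<And>t x y. 0 \<le> t \<Longrightarrow> \<bar>F t x - F t y\<bar> \<le> L * \<bar>x - y\<bar>"
    and L_pos: "0 < L"
begin

lemma continuous_on_F_compose:
  assumes "continuous_on {0..} z"
  shows "continuous_on {0..} (\<lambda>t. F t (z t))"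
proof -
  have "continuous_on {0..} (\<lambda>t. (\<lambda>(t, x). F t x) (t, z t))"
    by (rule continuous_on_compose2[OF F_continuous]) (auto intro: continuous_intros assms)
  then show ?thesis by simp
qed

text \<open>Bielecki's trick: writing a solution as \<open>z t = x0 + exp (2 * L * t) * p t\<close>, the Picard
  operator becomes a contraction with constant \<open>1/2\<close> for the sup norm of \<open>p\<close> on the whole
  half-line \<open>[0, \<infinity>)\<close>; it is extended to negative times by its value at \<open>0\<close>.\<close>

definition weighted_picard :: "real \<Rightarrow> (real \<Rightarrow> real) \<Rightarrow> real \<Rightarrow> real" where
  "weighted_picard x0 p t =
     exp (- 2 * L * max 0 t) * integral {0..max 0 t} (\<lambda>\<tau>. F \<tau> (x0 + exp (2 * L * \<tau>) * p \<tau>))"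

lemma continuous_on_weighted_integrand:
  assumes "continuous_on UNIV p"
  shows "continuous_on {0..} (\<lambda>\<tau>. F \<tau> (x0 + exp (2 * L * \<tau>) * p \<tau>))"
  by (intro continuous_on_F_compose continuous_intros continuous_on_subset[OF assms]) auto

lemma weighted_integrand_integrable:
  assumes "continuous_on UNIV p" "0 \<le> x"
  shows "(\<lambda>\<tau>. F \<tau> (x0 + exp (2 * L * \<tau>) * p \<tau>)) integrable_on {0..x}"
  by (rule integrable_continuous_interval continuous_on_subset
      [OF continuous_on_weighted_integrand[OF assms(1)]])+ auto

lemma continuous_on_weighted_picard:
  assumes "continuous_on UNIV p"
  shows "continuous_on UNIV (weighted_picard x0 p)"
proof -
  let ?G = "\<lambda>x. exp (- 2 * L * x) * integral {0..x} (\<lambda>\<tau>. F \<tau> (x0 + exp (2 * L * \<tau>) * p \<tau>))"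
  have "continuous_on {0..} ?G"
    using integral_has_real_derivative_atLeast[OF continuous_on_weighted_integrand[OF assms]]
    by (intro continuous_intros DERIV_continuous_on) auto
  then have "continuous_on UNIV (\<lambda>t. ?G (max 0 t))"
    by (rule continuous_on_compose2) (auto intro: continuous_intros)
  then show ?thesis
    unfolding weighted_picard_def .
qed

lemma weighted_picard_bounded:
  assumes "continuous_on UNIV p"
  shows "\<bar>weighted_picard x0 p t\<bar> \<le> M / (2 * L)"
proof -
  define x where "x = max 0 t"
  have x: "0 \<le> x" by (simp add: x_def)
  have "\<bar>integral {0..x} (\<lambda>\<tau>. F \<tau> (x0 + exp (2 * L * \<tau>) * p \<tau>))\<bar> \<le> integral {0..x} (\<lambda>_. M)"
    unfolding real_norm_def[symmetric]
    by (rule integral_norm_bound_integral[OF weighted_integrand_integrable[OF assms x]])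
      (auto simp: F_bounded)
  also have "\<dots> = M * x" using x by simp
  also have "\<dots> \<le> M * (exp (2 * L * x) / (2 * L))"
  proof -
    have "2 * L * x \<le> exp (2 * L * x)"
      using exp_ge_add_one_self[of "2 * L * x"] by linarith
    then show ?thesis
      using F_bounded[of 0 0] L_pos by (intro mult_left_mono) (auto simp: field_simps)
  qed
  finally show ?thesis
    using L_pos by (simp add: weighted_picard_def x_def[symmetric] abs_mult field_simps
        exp_minus)
qed

lemma weighted_picard_contraction:
  assumes p: "continuous_on UNIV p" and q: "continuous_on UNIV q"
    and D: "\<And>\<tau>. \<bar>p \<tau> - q \<tau>\<bar> \<le> D"
  shows "\<bar>weighted_picard x0 p t - weighted_picard x0 q t\<bar> \<le> D / 2"
proof -
  define x where "x = max 0 t"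
  have x: "0 \<le> x" by (simp add: x_def)
  have D_nonneg: "0 \<le> D" using D[of 0] by linarith
  let ?Fp = "\<lambda>\<tau>. F \<tau> (x0 + exp (2 * L * \<tau>) * p \<tau>)"
  let ?Fq = "\<lambda>\<tau>. F \<tau> (x0 + exp (2 * L * \<tau>) * q \<tau>)"
  have exp_integral: "((\<lambda>\<tau>. L * D * exp (2 * L * \<tau>)) has_integral D / 2 * (exp (2 * L * x) - 1)) {0..x}"
  proof -
    have "((\<lambda>\<tau>. D / 2 * exp (2 * L * \<tau>)) has_real_derivative L * D * exp (2 * L * \<tau>))
        (at \<tau> within {0..x})" for \<tau>
      by (auto intro!: derivative_eq_intros)
    then have "((\<lambda>\<tau>. L * D * exp (2 * L * \<tau>)) has_integral
        D / 2 * exp (2 * L * x) - D / 2 * exp (2 * L * 0)) {0..x}"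
      by (intro fundamental_theorem_of_calculus x)
        (simp add: has_real_derivative_iff_has_vector_derivative)
    then show ?thesis by (simp add: algebra_simps)
  qed
  have "\<bar>integral {0..x} (\<lambda>\<tau>. ?Fp \<tau> - ?Fq \<tau>)\<bar> \<le> integral {0..x} (\<lambda>\<tau>. L * D * exp (2 * L * \<tau>))"
    unfolding real_norm_def[symmetric]
  proof (rule integral_norm_bound_integral)
    show "(\<lambda>\<tau>. ?Fp \<tau> - ?Fq \<tau>) integrable_on {0..x}"
      by (intro integrable_diff weighted_integrand_integrable p q x)
    show "(\<lambda>\<tau>. L * D * exp (2 * L * \<tau>)) integrable_on {0..x}"
      using exp_integral by blast
    fix \<tau> assume "\<tau> \<in> {0..x}"
    then have "\<bar>?Fp \<tau> - ?Fq \<tau>\<bar> \<le> L * \<bar>exp (2 * L * \<tau>) * (p \<tau> - q \<tau>)\<bar>"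
      using F_lipschitz[of \<tau> "x0 + exp (2 * L * \<tau>) * p \<tau>" "x0 + exp (2 * L * \<tau>) * q \<tau>"]
      by (simp add: right_diff_distrib)
    also have "\<dots> \<le> L * D * exp (2 * L * \<tau>)"
      using D[of \<tau>] L_pos by (simp add: abs_mult)
    finally show "norm (?Fp \<tau> - ?Fq \<tau>) \<le> L * D * exp (2 * L * \<tau>)" by simp
  qed
  also have "\<dots> = D / 2 * (exp (2 * L * x) - 1)"
    using exp_integral by (rule integral_unique)
  finally have "exp (- 2 * L * x) * \<bar>integral {0..x} (\<lambda>\<tau>. ?Fp \<tau> - ?Fq \<tau>)\<bar>
      \<le> exp (- 2 * L * x) * (D / 2 * (exp (2 * L * x) - 1))"
    by (rule mult_left_mono) simp
  also have "\<dots> = D / 2 - D / 2 * exp (- 2 * L * x)"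
    by (simp add: algebra_simps flip: exp_add)
  also have "\<dots> \<le> D / 2" using D_nonneg by simp
  finally show ?thesis
    unfolding weighted_picard_def x_def[symmetric]
    by (simp add: integral_diff[OF weighted_integrand_integrable[OF p x]
          weighted_integrand_integrable[OF q x]] abs_mult flip: right_diff_distrib)
qed

lemma weighted_picard_fixed_point:
  "\<exists>p. continuous_on UNIV p \<and> weighted_picard x0 p = p"
proof -
  define \<Phi> where "\<Phi> p = Bcontfun (weighted_picard x0 (apply_bcontfun p))" for p :: "real \<Rightarrow>\<^sub>C real"
  have apply_\<Phi>: "apply_bcontfun (\<Phi> p) = weighted_picard x0 (apply_bcontfun p)" for p
    unfolding \<Phi>_def
    by (intro Bcontfun_inverse bcontfun_normI continuous_on_weighted_picard)
      (auto intro: weighted_picard_bounded)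
  have "dist (\<Phi> p) (\<Phi> q) \<le> 1/2 * dist p q" for p q
  proof (rule dist_bound)
    fix t
    have "\<bar>weighted_picard x0 p t - weighted_picard x0 q t\<bar> \<le> dist p q / 2"
      by (rule weighted_picard_contraction) (auto simp flip: dist_real_def intro: dist_bounded)
    then show "dist (\<Phi> p t) (\<Phi> q t) \<le> 1/2 * dist p q"
      by (simp add: apply_\<Phi> dist_real_def)
  qed
  then obtain p where "\<Phi> p = p"
    using banach_fix_type[of "1/2" \<Phi>] by auto
  then show ?thesis
    using apply_\<Phi> by (metis continuous_on_apply_bcontfun)
qed

theorem bounded_lipschitz_ode_solution_exists:
  "\<exists>z. z 0 = x0 \<and> (\<forall>t\<ge>0. (z has_real_derivative F t (z t)) (at t within {0..}))"
proof -
  obtain p where p: "continuous_on UNIV p" and fixed: "weighted_picard x0 p = p"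
    using weighted_picard_fixed_point by blast
  define z where "z t = x0 + exp (2 * L * t) * p t" for t
  have z_integral: "z t = x0 + integral {0..t} (\<lambda>\<tau>. F \<tau> (z \<tau>))" if "0 \<le> t" for t
    using fun_cong[OF fixed, of t] that
    by (simp add: z_def weighted_picard_def exp_minus field_simps)
  have "z 0 = x0" using z_integral[of 0] by simp
  moreover have "(z has_real_derivative F t (z t)) (at t within {0..})" if t: "0 \<le> t" for t
  proof -
    have "((\<lambda>t. x0 + integral {0..t} (\<lambda>\<tau>. F \<tau> (z \<tau>))) has_real_derivative F t (z t))
        (at t within {0..})"
      using continuous_on_weighted_integrand[OF p, of x0] t
      by (auto intro!: derivative_eq_intros integral_has_real_derivative_atLeast simp: z_def)
    then show ?thesis
      by (rule has_field_derivative_transform_within[where d=1]) (use t z_integral in auto)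
  qed
  ultimately show ?thesis by blast
qed

end

section \<open>The solution \<open>v\<close>\<close>

lemma abs_inverse_max_one_diff_le: "\<bar>1 / max x 1 - 1 / max y 1\<bar> \<le> \<bar>x - (y::real)\<bar>"
proof -
  have x: "1 \<le> max x 1" and y: "1 \<le> max y 1" by auto
  have "\<bar>1 / max x 1 - 1 / max y 1\<bar> = \<bar>max y 1 - max x 1\<bar> / (max x 1 * max y 1)"
    using x y by (simp add: field_simps abs_divide)
  also have "\<dots> \<le> \<bar>max y 1 - max x 1\<bar>"
    using mult_mono[OF x y] by (simp add: divide_le_eq mult_le_cancel_left1)
  also have "\<dots> \<le> \<bar>x - y\<bar>" by auto
  finally show ?thesis .
qed

text \<open>Replacing \<open>1 / u\<close> by the bounded Lipschitz function \<open>1 / max u 1\<close> and subtracting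
  \<open>\<integral> s\<close> yields an equation with a bounded Lipschitz right-hand side; its solution never
  leaves \<open>[1, \<infinity>)\<close>, where the truncation is inactive.\<close>

lemma reciprocal_ode_solution_exists:
  fixes s :: "real \<Rightarrow> real"
  assumes s_cont: "continuous_on {0..} s" and s_nonneg: "\<And>t. 0 \<le> t \<Longrightarrow> 0 \<le> s t"
  shows "\<exists>u. u 0 = 1 \<and> (\<forall>t\<ge>0. 1 \<le> u t \<and> (u has_real_derivative s t + 1 / u t) (at t within {0..}))"
proof -
  define S where "S t = integral {0..t} s" for t
  have dS: "(S has_real_derivative s t) (at t within {0..})" if "0 \<le> t" for t
    unfolding S_def[abs_def] using s_cont that by (rule integral_has_real_derivative_atLeast)
  have "continuous_on ({0..} \<times> UNIV) (\<lambda>p. S (fst p))"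
    by (rule continuous_on_compose2[OF DERIV_continuous_on[OF dS]]) (auto intro: continuous_intros)
  then have "continuous_on ({0..} \<times> UNIV) (\<lambda>(t, x). 1 / max (1 + S t + x) 1)"
    unfolding case_prod_beta by (intro continuous_intros) auto
  then have "\<exists>z. z 0 = 0 \<and>
      (\<forall>t\<ge>0. (z has_real_derivative 1 / max (1 + S t + z t) 1) (at t within {0..}))"
    by (rule bounded_lipschitz_ode_solution_exists[where M=1 and L=1])
      (auto intro: abs_inverse_max_one_diff_le[THEN order_trans])
  then obtain z where z0: "z 0 = 0"
    and dz: "\<And>t. 0 \<le> t \<Longrightarrow> (z has_real_derivative 1 / max (1 + S t + z t) 1) (at t within {0..})"
    by blast
  define u where "u t = 1 + S t + z t" for t
  have du: "(u has_real_derivative s t + 1 / max (u t) 1) (at t within {0..})" if "0 \<le> t" for t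
    unfolding u_def[abs_def] using that by (auto intro!: derivative_eq_intros dS dz)
  have u0: "u 0 = 1" by (simp add: u_def S_def z0)
  have u_ge: "1 \<le> u t" if t: "0 \<le> t" for t
  proof -
    obtain x where "0 \<le> x" "u t - u 0 = (s x + 1 / max (u x) 1) * (t - 0)"
      using mvt_within_atLeast[OF du order_refl t] by blast
    moreover have "0 \<le> (s x + 1 / max (u x) 1) * (t - 0)"
      using s_nonneg[OF \<open>0 \<le> x\<close>] t by simp
    ultimately show ?thesis using u0 by linarith
  qed
  show ?thesis
    using u0 u_ge du by (intro exI[of _ u]) (auto simp: max_absorb1)
qed

lemma positive_vsol_exists:
  assumes "0 \<le> w"
  shows "\<exists>v. is_vsol A w v \<and> (\<forall>t\<ge>0. 0 < v t)"
proof -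
  have "\<exists>u. u 0 = 1 \<and> (\<forall>t\<ge>0. 1 \<le> u t \<and>
      (u has_real_derivative sqrt (A\<^sup>2 * t\<^sup>2 + w) + 1 / u t) (at t within {0..}))"
    using assms by (intro reciprocal_ode_solution_exists continuous_intros) auto
  then obtain u where u0: "u 0 = 1" and u_ge: "\<And>t. 0 \<le> t \<Longrightarrow> 1 \<le> u t"
    and du: "\<And>t. 0 \<le> t \<Longrightarrow>
      (u has_real_derivative sqrt (A\<^sup>2 * t\<^sup>2 + w) + 1 / u t) (at t within {0..})"
    by blast
  define v where "v t = (if t < 0 then 0 else 1 / u t)" for t
  have "(v has_real_derivative - (v t)\<^sup>2 * (sqrt (A\<^sup>2 * t\<^sup>2 + w) + v t)) (at t within {0..})"
    if t: "0 \<le> t" for t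
  proof -
    have "((\<lambda>s. 1 / u s) has_real_derivative - (v t)\<^sup>2 * (sqrt (A\<^sup>2 * t\<^sup>2 + w) + v t))
        (at t within {0..})"
      using du[OF t] u_ge[OF t] t
      by (auto intro!: derivative_eq_intros simp: v_def field_simps power2_eq_square)
    then show ?thesis
      by (rule has_field_derivative_transform_within[where d=1]) (use t in \<open>auto simp: v_def\<close>)
  qed
  moreover have "0 < v t" if "0 \<le> t" for t
    using u_ge[OF that] that by (simp add: v_def)
  ultimately show ?thesis
    using u0 by (intro exI[of _ v]) (auto simp: is_vsol_def v_def)
qed

lemma is_vsol_unique:
  assumes v1: "is_vsol A w v1" and v2: "is_vsol A w v2"
  shows "v1 = v2"
proof
  fix t
  define s where "s t = sqrt (A\<^sup>2 * t\<^sup>2 + w)" for t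
  have d1: "(v1 has_real_derivative - (v1 t)\<^sup>2 * (s t + v1 t)) (at t within {0..})"
    and d2: "(v2 has_real_derivative - (v2 t)\<^sup>2 * (s t + v2 t)) (at t within {0..})"
    if "0 \<le> t" for t
    using v1 v2 that by (auto simp: is_vsol_def s_def)
  define a where "a t = - ((v1 t + v2 t) * s t + (v1 t)\<^sup>2 + v1 t * v2 t + (v2 t)\<^sup>2)" for t
  have a_cont: "continuous_on {0..} a"
    unfolding a_def s_def
    by (intro continuous_intros DERIV_continuous_on[OF d1] DERIV_continuous_on[OF d2]) auto
  have d12: "((\<lambda>t. v1 t - v2 t) has_real_derivative a t * (v1 t - v2 t)) (at t within {0..})"
    if "0 \<le> t" for t
    using DERIV_diff[OF d1[OF that] d2[OF that]]
    by (simp add: a_def algebra_simps power2_eq_square)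
  have "v1 t - v2 t = 0" if "0 \<le> t"
    by (rule linear_ode_solution_zero[OF a_cont _ d12 that]) (use v1 v2 in \<open>simp add: is_vsol_def\<close>)
  then show "v1 t = v2 t"
    using v1 v2 by (cases "0 \<le> t") (auto simp: is_vsol_def)
qed

lemma vsol_eqI: "is_vsol A w v \<Longrightarrow> vsol A w = v"
  unfolding vsol_def by (rule the_equality) (auto intro: is_vsol_unique)

context
  fixes A w :: real
  assumes w_nonneg: "0 \<le> w"
begin

lemma is_vsol_vsol: "is_vsol A w (vsol A w)"
  and vsol_pos: "0 \<le> t \<Longrightarrow> 0 < vsol A w t"
proof -
  obtain v where v: "is_vsol A w v" and v_pos: "\<forall>t\<ge>0. 0 < v t"
    using positive_vsol_exists[OF w_nonneg] by blast
  with vsol_eqI[OF v] show "is_vsol A w (vsol A w)" "0 \<le> t \<Longrightarrow> 0 < vsol A w t"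
    by simp_all
qed

lemma has_real_derivative_vsol:
  "0 \<le> t \<Longrightarrow> (vsol A w has_real_derivative
    - (vsol A w t)\<^sup>2 * (sqrt (A\<^sup>2 * t\<^sup>2 + w) + vsol A w t)) (at t within {0..})"
  using is_vsol_vsol by (simp add: is_vsol_def)

lemma vsol_zero: "vsol A w 0 = 1"
  using is_vsol_vsol by (simp add: is_vsol_def)

lemma continuous_on_vsol: "continuous_on {0..} (vsol A w)"
  by (rule DERIV_continuous_on[OF has_real_derivative_vsol]) auto

lemma vsol_strict_decreasing:
  assumes "0 \<le> a" "a < b"
  shows "vsol A w b < vsol A w a"
proof -
  obtain x where "a \<le> x" "x \<le> b" and mvt: "vsol A w b - vsol A w a
      = - (vsol A w x)\<^sup>2 * (sqrt (A\<^sup>2 * x\<^sup>2 + w) + vsol A w x) * (b - a)"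
    by (rule mvt_within_atLeast[OF has_real_derivative_vsol \<open>0 \<le> a\<close> less_imp_le[OF \<open>a < b\<close>]])
  then have "0 < vsol A w x" using vsol_pos \<open>0 \<le> a\<close> by simp
  then have "0 < (vsol A w x)\<^sup>2 * (sqrt (A\<^sup>2 * x\<^sup>2 + w) + vsol A w x) * (b - a)"
    using w_nonneg \<open>a < b\<close> by (simp add: add_nonneg_pos)
  then show ?thesis using mvt by simp
qed

lemma vsol_le_one: "0 \<le> t \<Longrightarrow> vsol A w t \<le> 1"
  using vsol_strict_decreasing[of 0 t] vsol_zero by (cases "t = 0") auto

lemma inverse_vsol_ge:
  assumes t: "0 \<le> t"
  shows "1 + \<bar>A\<bar> * t\<^sup>2 / 2 \<le> 1 / vsol A w t"
proof -
  let ?f = "\<lambda>t. 1 / vsol A w t - \<bar>A\<bar> * t\<^sup>2 / 2"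
  have der: "(?f has_real_derivative sqrt (A\<^sup>2 * t\<^sup>2 + w) + vsol A w t - \<bar>A\<bar> * t)
      (at t within {0..})" if "0 \<le> t" for t
  proof -
    have "((\<lambda>t. 1 / vsol A w t) has_real_derivative sqrt (A\<^sup>2 * t\<^sup>2 + w) + vsol A w t)
        (at t within {0..})"
      apply (rule DERIV_cong[OF DERIV_divide[OF DERIV_const has_real_derivative_vsol[OF that]]])
      using vsol_pos[OF that] apply simp
      using vsol_pos[OF that] apply (simp add: power2_eq_square)
      done
    moreover have "((\<lambda>t. \<bar>A\<bar> * t\<^sup>2 / 2) has_real_derivative \<bar>A\<bar> * t) (at t within {0..})"
      by (auto intro!: derivative_eq_intros)
    ultimately show ?thesis by (rule DERIV_diff)
  qed
  obtain x where "0 \<le> x" "x \<le> t"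
    and mvt: "?f t - ?f 0 = (sqrt (A\<^sup>2 * x\<^sup>2 + w) + vsol A w x - \<bar>A\<bar> * x) * (t - 0)"
    by (rule mvt_within_atLeast[OF der order_refl t])
  have "\<bar>A\<bar> * x = sqrt ((\<bar>A\<bar> * x)\<^sup>2)" using \<open>0 \<le> x\<close> by simp
  also have "\<dots> \<le> sqrt (A\<^sup>2 * x\<^sup>2 + w)" using w_nonneg by (simp add: power_mult_distrib)
  finally have "0 \<le> (sqrt (A\<^sup>2 * x\<^sup>2 + w) + vsol A w x - \<bar>A\<bar> * x) * (t - 0)"
    using vsol_pos[OF \<open>0 \<le> x\<close>] t by (intro mult_nonneg_nonneg) auto
  then have "?f 0 \<le> ?f t" using mvt by linarith
  then show ?thesis using vsol_zero by simp
qed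

lemma
  assumes A: "A \<noteq> 0" and vn: "0 < vn" "vn < 1"
  shows t_end_nonneg: "0 \<le> t_end A vn w"
    and vsol_t_end: "vsol A w (t_end A vn w) = vn"
proof -
  define T0 where "T0 = sqrt (2 / (\<bar>A\<bar> * vn))"
  have T0: "0 \<le> T0" "\<bar>A\<bar> * T0\<^sup>2 / 2 = 1 / vn"
    using A vn by (auto simp: T0_def)
  then have "1 / vn < 1 / vsol A w T0"
    using inverse_vsol_ge[of T0] by simp
  then have "vsol A w T0 \<le> vn"
    using vsol_pos[OF T0(1)] vn by (auto simp: field_simps)
  moreover have "vn \<le> vsol A w 0" using vsol_zero vn by simp
  ultimately obtain T where T: "0 \<le> T" "vsol A w T = vn"
    using IVT2'[OF _ _ T0(1) continuous_on_subset[OF continuous_on_vsol]] by auto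
  have "t_end A vn w = T"
    unfolding t_end_def
  proof (rule the_equality)
    fix t assume "0 \<le> t \<and> vsol A w t = vn"
    then show "t = T"
      using T vsol_strict_decreasing[of t T] vsol_strict_decreasing[of T t]
      by (metis less_irrefl linorder_neqE)
  qed (use T in simp)
  then show "0 \<le> t_end A vn w" "vsol A w (t_end A vn w) = vn"
    using T by simp_all
qed

lemma t_end_sq_bound:
  assumes "A \<noteq> 0" "0 < vn" "vn < 1"
  shows "1 + \<bar>A\<bar> * (t_end A vn w)\<^sup>2 / 2 \<le> 1 / vn"
  using inverse_vsol_ge[OF t_end_nonneg[OF assms]] vsol_t_end[OF assms] by simp

lemma I_fun_le:
  assumes A: "0 < A" and w: "0 < w" and vn: "0 < vn" "vn < 1"
  shows "I_fun A vn w \<le> A * (t_end A vn w)\<^sup>2 / (2 * sqrt w)"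
proof -
  define T where "T = t_end A vn w"
  have T: "0 \<le> T" using t_end_nonneg A vn by (simp add: T_def)
  have root_pos: "0 < sqrt (A\<^sup>2 * t\<^sup>2 + w)" for t
    using w by (simp add: add_nonneg_pos)
  have "((\<lambda>t. A * t / sqrt w) has_integral A * T\<^sup>2 / (2 * sqrt w) - A * 0\<^sup>2 / (2 * sqrt w)) {0..T}"
  proof (rule fundamental_theorem_of_calculus[OF T])
    fix t :: real
    have "((\<lambda>t. A * t\<^sup>2 / (2 * sqrt w)) has_real_derivative A * t / sqrt w) (at t within {0..T})"
      using w by (auto intro!: derivative_eq_intros simp: field_simps)
    then show "((\<lambda>t. A * t\<^sup>2 / (2 * sqrt w)) has_vector_derivative A * t / sqrt w) (at t within {0..T})"
      by (simp add: has_real_derivative_iff_has_vector_derivative)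
  qed
  then have linear_integral: "((\<lambda>t. A * t / sqrt w) has_integral A * T\<^sup>2 / (2 * sqrt w)) {0..T}"
    by simp
  have "I_fun A vn w = integral {0..T} (\<lambda>t. A * t * vsol A w t / sqrt (A\<^sup>2 * t\<^sup>2 + w))"
    by (simp add: I_fun_def T_def)
  also have "\<dots> \<le> integral {0..T} (\<lambda>t. A * t / sqrt w)"
  proof (rule integral_le)
    show "(\<lambda>t. A * t * vsol A w t / sqrt (A\<^sup>2 * t\<^sup>2 + w)) integrable_on {0..T}"
      using root_pos
      by (intro integrable_continuous_interval continuous_intros
          continuous_on_subset[OF continuous_on_vsol]) (auto simp: less_imp_neq[symmetric])
    show "(\<lambda>t. A * t / sqrt w) integrable_on {0..T}"
      using linear_integral by blast
    fix t assume "t \<in> {0..T}"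
    then have t: "0 \<le> t" by simp
    have "A * t * vsol A w t / sqrt (A\<^sup>2 * t\<^sup>2 + w) \<le> A * t / sqrt (A\<^sup>2 * t\<^sup>2 + w)"
      using vsol_le_one[OF t] A t root_pos[of t]
      by (intro divide_right_mono mult_left_le) auto
    also have "\<dots> \<le> A * t / sqrt w"
      using A t w by (intro divide_left_mono) (auto simp: add_nonneg_pos)
    finally show "A * t * vsol A w t / sqrt (A\<^sup>2 * t\<^sup>2 + w) \<le> A * t / sqrt w" .
  qed
  also have "\<dots> = A * T\<^sup>2 / (2 * sqrt w)"
    using linear_integral by (rule integral_unique)
  finally show ?thesis by (simp add: T_def)
qed

end

lemma A_t_end_sq_less:
  assumes "0 < A" "0 \<le> w" "0 < vn" "vn < 1"
  shows "A * (t_end A vn w)\<^sup>2 < 2 / vn"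
proof -
  have "1 + A * (t_end A vn w)\<^sup>2 / 2 \<le> 1 / vn"
    using t_end_sq_bound[of w A vn] assms by simp
  then show ?thesis using assms by (simp add: field_simps)
qed

lemma I_fun_less:
  assumes "0 < A" "0 < w" "0 < vn" "vn < 1"
  shows "I_fun A vn w < 1 / (vn * sqrt w)"
proof -
  have "I_fun A vn w \<le> A * (t_end A vn w)\<^sup>2 / 2 / sqrt w"
    using I_fun_le[of w A vn] assms by simp
  also have "\<dots> < 1 / vn / sqrt w"
    using A_t_end_sq_less[of A w vn] assms by (intro divide_strict_right_mono) auto
  finally show ?thesis by simp
qed

theorem mainTheorem8:
  fixes A vn :: real
  assumes "A > 0" and "0 < vn" and "vn < 1"
  shows "(\<forall>w\<ge>0. A * (t_end A vn w)\<^sup>2 < 2 / vn)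
       \<and> (\<forall>w>0. I_fun A vn w < 1 / (vn * sqrt w))
       \<and> (\<forall>B w. B > 0 \<longrightarrow> w > 0 \<longrightarrow> I_fun A vn w = B \<longrightarrow> w \<le> 1 / (vn\<^sup>2 * B\<^sup>2))"
proof (intro conjI allI impI)
  fix B w :: real
  assume B: "B > 0" and w: "w > 0" and "I_fun A vn w = B"
  then have "sqrt w * (vn * B) < 1"
    using I_fun_less[of A w vn] assms by (simp add: field_simps)
  then have "(sqrt w * (vn * B))\<^sup>2 < 1\<^sup>2"
    using assms w B by (intro power_strict_mono) auto
  then show "w \<le> 1 / (vn\<^sup>2 * B\<^sup>2)"
    using assms w B by (simp add: power_mult_distrib pos_le_divide_eq)
qed (use assms A_t_end_sq_less I_fun_less in auto)

end
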